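(* For $l\in\mathbb N$, $a>0$ and $b>0$, $$\sum_{k=0}^{l-1}\binom{k+l}{l}\frac{a^kb^l+a^lb^k}{(a+b)^{k+l}(k+l)}=\frac1l.$$ *)

theory Defs
  imports Complex_Main
begin

end

theory Submission
  imports Defs
begin

(* Write l = m + 1 and clear denominators. Absorption turns binom(k+l, l)/(k+l) into
   binom(m+k, k)/l, so the claim becomes the polynomial identity
     (a+b)^(2m+1) = sum_{k<=m} binom(m+k, k) (a^k b^(m+1) + a^(m+1) b^k) (a+b)^(m-k).
   The partial sum identity
     sum_{k<=m} binom(m+k, k) x^k (x+y)^(m-k) = sum_{k<=m} binom(2m+1, k) x^k y^(m-k)
   identifies the two halves of the right-hand side with the lower and the upper half of the
   binomial expansion of (a+b)^(2m+1). *)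

lemma choose_partial_sum_poly:
  fixes x y :: "'a::field_char_0"
  shows "(\<Sum>k\<le>m. of_nat ((m + k) choose k) * x ^ k * (x + y) ^ (m - k))
       = (\<Sum>k\<le>m. of_nat ((2 * m + 1) choose k) * x ^ k * y ^ (m - k))"
proof -
  have "(of_nat m + (of_nat m + 1) gchoose k :: 'a) = of_nat ((2 * m + 1) choose k)" for k
    using binomial_gbinomial[of "2 * m + 1" k, where 'a='a] by (simp add: add_ac)
  moreover have "(of_nat k + (of_nat m + 1) - 1 gchoose k :: 'a) = of_nat ((m + k) choose k)" for k
    using binomial_gbinomial[of "m + k" k, where 'a='a] by (simp add: add.commute)
  ultimately show ?thesis
    using gbinomial_partial_sum_poly_xpos[of m "of_nat m + 1" x y] by simp
qed

lemma binomial_ring_odd_halves: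
  fixes a b :: "'a::comm_semiring_1"
  shows "(a + b) ^ (2 * m + 1)
       = (\<Sum>k\<le>m. of_nat ((2 * m + 1) choose k) * a ^ k * b ^ (2 * m + 1 - k))
       + (\<Sum>k\<le>m. of_nat ((2 * m + 1) choose k) * b ^ k * a ^ (2 * m + 1 - k))"
proof -
  let ?n = "2 * m + 1"
  let ?t = "\<lambda>k. of_nat (?n choose k) * a ^ k * b ^ (?n - k)"
  have upper_half: "(\<Sum>k\<le>m. of_nat (?n choose k) * b ^ k * a ^ (?n - k))
      = (\<Sum>k = Suc m..m + (m + 1). ?t k)"
  proof (rule sum.reindex_bij_witness[where i="\<lambda>k. ?n - k" and j="\<lambda>k. ?n - k"])
    fix k assume "k \<in> {..m}"
    then have "k \<le> ?n" by simp
    then have "?n choose (?n - k) = ?n choose k" and "?n - (?n - k) = k"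
      by (simp_all flip: binomial_symmetric)
    then show "?t (?n - k) = of_nat (?n choose k) * b ^ k * a ^ (?n - k)"
      by (simp add: mult_ac)
  qed auto
  have "(a + b) ^ ?n = (\<Sum>k\<le>m + (m + 1). ?t k)"
    using binomial_ring[of a b ?n] by (simp only: mult_2 add.assoc)
  also have "\<dots> = (\<Sum>k\<le>m. ?t k) + (\<Sum>k = Suc m..m + (m + 1). ?t k)"
    by (rule sum_up_index_split)
  finally show ?thesis
    by (simp only: upper_half [symmetric])
qed

lemma power_odd_eq_sum_choose:
  fixes a b :: "'a::field_char_0"
  shows "(a + b) ^ (2 * m + 1)
       = (\<Sum>k\<le>m. of_nat ((m + k) choose k) * (a ^ k * b ^ (m + 1) + a ^ (m + 1) * b ^ k)
                    * (a + b) ^ (m - k))"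
proof -
  have half: "(\<Sum>k\<le>m. of_nat ((m + k) choose k) * x ^ k * y ^ (m + 1) * (x + y) ^ (m - k))
      = (\<Sum>k\<le>m. of_nat ((2 * m + 1) choose k) * x ^ k * y ^ (2 * m + 1 - k))" for x y :: 'a
  proof -
    have "y ^ (2 * m + 1 - k) = y ^ (m + 1) * y ^ (m - k)" if "k \<le> m" for k
    proof -
      from that have "2 * m + 1 - k = (m + 1) + (m - k)" by simp
      then show ?thesis by (simp only: power_add)
    qed
    then have "(\<Sum>k\<le>m. of_nat ((2 * m + 1) choose k) * x ^ k * y ^ (2 * m + 1 - k))
        = y ^ (m + 1) * (\<Sum>k\<le>m. of_nat ((2 * m + 1) choose k) * x ^ k * y ^ (m - k))"
      by (simp add: sum_distrib_left mult_ac)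
    also have "\<dots> = y ^ (m + 1) * (\<Sum>k\<le>m. of_nat ((m + k) choose k) * x ^ k * (x + y) ^ (m - k))"
      by (simp only: choose_partial_sum_poly)
    finally show ?thesis
      by (simp add: sum_distrib_left mult_ac)
  qed
  have "(a + b) ^ (2 * m + 1)
      = (\<Sum>k\<le>m. of_nat ((m + k) choose k) * a ^ k * b ^ (m + 1) * (a + b) ^ (m - k))
      + (\<Sum>k\<le>m. of_nat ((m + k) choose k) * b ^ k * a ^ (m + 1) * (b + a) ^ (m - k))"
    by (simp only: binomial_ring_odd_halves half)
  then show ?thesis
    by (simp add: add.commute[of b a] sum.distrib [symmetric] algebra_simps)
qed

lemma choose_absorption_shift:
  "Suc m * ((k + Suc m) choose Suc m) = (k + Suc m) * ((m + k) choose k)"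
proof -
  have "(m + k) choose m = (m + k) choose k"
    using binomial_symmetric[of k "m + k"] by simp
  with Suc_times_binomial[of m "m + k"] show ?thesis
    by (simp add: add.commute)
qed

lemma choose_over_power_common_denominator:
  fixes s z :: "'a::field_char_0"
  assumes "s \<noteq> 0" and "k \<le> m"
  shows "of_nat ((k + Suc m) choose Suc m) * z / (s ^ (k + Suc m) * of_nat (k + Suc m))
       = of_nat ((m + k) choose k) * z * s ^ (m - k) / (s ^ (2 * m + 1) * of_nat (Suc m))"
proof -
  have "2 * m + 1 = (k + Suc m) + (m - k)"
    using assms(2) by simp
  then have "s ^ (2 * m + 1) = s ^ (k + Suc m) * s ^ (m - k)"
    by (simp only: power_add)
  moreover have "of_nat (Suc m) * of_nat ((k + Suc m) choose Suc m)
      = (of_nat (k + Suc m) * of_nat ((m + k) choose k) :: 'a)"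
    by (metis choose_absorption_shift of_nat_mult)
  ultimately show ?thesis
    using assms(1) by (simp add: field_simps del: of_nat_Suc of_nat_add)
qed

theorem lemma2p2:
  fixes l :: nat and a b :: real
  assumes "l \<ge> 1" and "a > 0" and "b > 0"
  shows "(\<Sum>k=0..<l. real ((k + l) choose l) *
            (a ^ k * b ^ l + a ^ l * b ^ k) / ((a + b) ^ (k + l) * real (k + l))) = 1 / real l"
proof -
  obtain m where l: "l = Suc m"
    using assms(1) by (cases l) auto
  have ab: "a + b \<noteq> 0"
    using assms by simp
  have "(\<Sum>k=0..<l. real ((k + l) choose l) *
            (a ^ k * b ^ l + a ^ l * b ^ k) / ((a + b) ^ (k + l) * real (k + l)))
      = (\<Sum>k\<le>m. real ((m + k) choose k) * (a ^ k * b ^ l + a ^ l * b ^ k)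
                    * (a + b) ^ (m - k)) / ((a + b) ^ (2 * m + 1) * real l)"
    unfolding sum_divide_distrib l
    by (intro sum.cong choose_over_power_common_denominator ab) (auto simp: atLeast0LessThan)
  also have "\<dots> = (a + b) ^ (2 * m + 1) / ((a + b) ^ (2 * m + 1) * real l)"
    using l by (simp only: Suc_eq_plus1 flip: power_odd_eq_sum_choose)
  also have "\<dots> = 1 / real l"
    using ab by simp
  finally show ?thesis .
qed

end
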